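(* Let $1\le b<\frac{n}{2}-1$, and let $T$ be a tree attaining the maximum value of $M_1$ over $\mathcal{CT}^*_{n,b}$, or a tree attaining the maximum value of $M_2$ over $\mathcal{CT}^*_{n,b}$. Then: (a) if $n_2>0$ then $n_1=2b+2$, $n_2=n-3b-2$, $n_3=0$ and $n_4=b$; (b) $n_2=0$ if and only if $n_1=n-b$, $n_3=3b-n+2$ and $n_4=n-2b-2$.
   Context: A chemical tree is a tree with maximum degree at most $4$. A branching vertex is a vertex of degree greater than $2$. $\mathcal{CT}^*_{n,b}$ is the class of all $n$-vertex chemical trees with exactly $b$ branching vertices. $n_i$ denotes the number of vertices of degree $i$ in $T$. $M_1(G)=\sum_v d_v^2$ and $M_2(G)=\sum_{uv\in E(G)}d_ud_v$, where $d_v$ is the degree of $v$. *)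

theory Defs
  imports Complex_Main
begin

text \<open>A graph on the vertex set {0..<n} is given by its edge set E, a set of
  2-element subsets of {0..<n}. Every n-vertex tree is isomorphic to one of these.\<close>

definition is_graph :: "nat \<Rightarrow> nat set set \<Rightarrow> bool" where
  "is_graph n E \<longleftrightarrow> (\<forall>e\<in>E. \<exists>u v. e = {u, v} \<and> u \<noteq> v \<and> u < n \<and> v < n)"

definition adj :: "nat set set \<Rightarrow> (nat \<times> nat) set" where
  "adj E = {(u, v). {u, v} \<in> E}"

definition connected_graph :: "nat \<Rightarrow> nat set set \<Rightarrow> bool" where
  "connected_graph n E \<longleftrightarrow> (\<forall>u<n. \<forall>v<n. (u, v) \<in> (adj E)\<^sup>*)"

definition is_tree :: "nat \<Rightarrow> nat set set \<Rightarrow> bool" where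
  "is_tree n E \<longleftrightarrow> n \<ge> 1 \<and> is_graph n E \<and> connected_graph n E \<and> card E = n - 1"

definition deg :: "nat set set \<Rightarrow> nat \<Rightarrow> nat" where
  "deg E v = card {e\<in>E. v \<in> e}"

definition chemical :: "nat \<Rightarrow> nat set set \<Rightarrow> bool" where
  "chemical n E \<longleftrightarrow> (\<forall>v<n. deg E v \<le> 4)"

definition num_deg :: "nat \<Rightarrow> nat set set \<Rightarrow> nat \<Rightarrow> nat" where
  "num_deg n E i = card {v. v < n \<and> deg E v = i}"

definition num_branching :: "nat \<Rightarrow> nat set set \<Rightarrow> nat" where
  "num_branching n E = card {v. v < n \<and> deg E v > 2}"

definition CT :: "nat \<Rightarrow> nat \<Rightarrow> nat set set set" where
  "CT n b = {E. is_tree n E \<and> chemical n E \<and> num_branching n E = b}"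

definition M1 :: "nat \<Rightarrow> nat set set \<Rightarrow> nat" where
  "M1 n E = (\<Sum>v<n. (deg E v)^2)"

definition M2 :: "nat set set \<Rightarrow> nat" where
  "M2 E = (\<Sum>e\<in>E. \<Prod>v\<in>e. deg E v)"

end

(*
  In an extremal tree a vertex w of degree 2 and a vertex v of degree 3 cannot coexist.
  Otherwise let y be a neighbour of w off the path from w to v; replacing the edge wy by vy
  gives again a chemical tree, with the same branching vertices (v goes from degree 3 to 4,
  w from 2 to 1), and both M1 and M2 strictly increase. Hence n2 > 0 forces n3 = 0, and the
  stated values follow from n = n1 + n2 + n3 + n4, n1 + 2 n2 + 3 n3 + 4 n4 = 2 (n - 1) and
  b = n3 + n4.
*)

theory Submission
  imports Defs
begin

abbreviation reach :: "nat set set \<Rightarrow> (nat \<times> nat) set" where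
  "reach F \<equiv> (adj F)\<^sup>*"

lemma adj_iff [simp]: "(u, v) \<in> adj F \<longleftrightarrow> {u, v} \<in> F"
  by (simp add: adj_def)

lemma reach_sym: "(u, v) \<in> reach F \<Longrightarrow> (v, u) \<in> reach F"
proof -
  have "sym (adj F)"
    by (auto simp: sym_def insert_commute)
  then show "(u, v) \<in> reach F \<Longrightarrow> (v, u) \<in> reach F"
    by (meson sym_rtrancl symD)
qed

lemma reach_mono: "F \<subseteq> G \<Longrightarrow> (u, v) \<in> reach F \<Longrightarrow> (u, v) \<in> reach G"
  using rtrancl_mono[of "adj F" "adj G"] by (auto simp: adj_def)

lemma reach_insert_edge:
  assumes "(u, v) \<in> reach (insert {a, b} F)"
  shows "(u, v) \<in> reach F \<or> ((u, a) \<in> reach F \<and> (b, v) \<in> reach F)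
           \<or> ((u, b) \<in> reach F \<and> (a, v) \<in> reach F)"
  using assms
proof (induction rule: rtrancl_induct)
  case base
  then show ?case by simp
next
  case (step y z)
  from step(2) consider "{y, z} \<in> F" | "y = a" "z = b" | "y = b" "z = a"
    by (auto simp: doubleton_eq_iff)
  then show ?case
  proof cases
    case 1
    then have "(y, z) \<in> adj F" by simp
    with step(3) show ?thesis by (meson rtrancl_into_rtrancl)
  qed (use step(3) reach_sym rtrancl_trans in blast)+
qed

lemma reach_insert_redundant_edge:
  assumes "(a, b) \<in> reach F" "(u, v) \<in> reach (insert {a, b} F)"
  shows "(u, v) \<in> reach F"
  using reach_insert_edge[OF assms(2)] assms(1) reach_sym rtrancl_trans by meson

lemma reach_from_isolated:
  assumes "\<forall>e\<in>F. w \<notin> e" "(w, z) \<in> reach F"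
  shows "z = w"
  using assms(2) by (cases rule: converse_rtranclE) (use assms(1) in auto)

definition component_mins :: "nat \<Rightarrow> nat set set \<Rightarrow> nat set" where
  "component_mins n F = {u. u < n \<and> (\<forall>v. (v, u) \<in> reach F \<longrightarrow> u \<le> v)}"

lemma component_mins_reach_eq:
  assumes "u \<in> component_mins n F" "u' \<in> component_mins n F" "(u, u') \<in> reach F"
  shows "u = u'"
  using assms reach_sym by (force simp: component_mins_def)

lemma component_min_lost_by_insert_edge:
  assumes "x \<in> component_mins n F" "x \<notin> component_mins n (insert {a, b} F)"
  obtains v where "v < x" "(v, a) \<in> reach F" "(b, x) \<in> reach F"
    | v where "v < x" "(v, b) \<in> reach F" "(a, x) \<in> reach F"
proof -
  from assms obtain v where v: "v < x" "(v, x) \<in> reach (insert {a, b} F)"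
    by (auto simp: component_mins_def not_le)
  have "(v, x) \<notin> reach F"
    using assms(1) v(1) by (auto simp: component_mins_def)
  with reach_insert_edge[OF v(2)] v(1) that show thesis by blast
qed

lemma card_component_mins_insert_edge:
  "card (component_mins n F) \<le> card (component_mins n (insert {a, b} F)) + 1"
proof -
  define Lost where "Lost = component_mins n F - component_mins n (insert {a, b} F)"
  have "x = y" if x: "x \<in> Lost" and y: "y \<in> Lost" for x y
  proof -
    have min_x: "x \<le> z" if "(z, x) \<in> reach F" for z
      using x that by (auto simp: Lost_def component_mins_def)
    have min_y: "y \<le> z" if "(z, y) \<in> reach F" for z
      using y that by (auto simp: Lost_def component_mins_def)
    have same: "x = y" if "(c, x) \<in> reach F" "(c, y) \<in> reach F" for c
      using x y that component_mins_reach_eq reach_sym rtrancl_trans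
      unfolding Lost_def by (metis Diff_iff)
    have crossed: False
      if "v1 < x" "(v1, c) \<in> reach F" "(d, x) \<in> reach F"
         "v2 < y" "(v2, d) \<in> reach F" "(c, y) \<in> reach F" for v1 v2 c d
    proof -
      have "x \<le> v2" using that(3,5) min_x rtrancl_trans by metis
      moreover have "y \<le> v1" using that(2,6) min_y rtrancl_trans by metis
      ultimately show False using that(1,4) by linarith
    qed
    have xm: "x \<in> component_mins n F" "x \<notin> component_mins n (insert {a, b} F)"
      and ym: "y \<in> component_mins n F" "y \<notin> component_mins n (insert {a, b} F)"
      using x y by (auto simp: Lost_def)
    show "x = y"
    proof (rule component_min_lost_by_insert_edge[OF xm];
        rule component_min_lost_by_insert_edge[OF ym])
    qed (metis same crossed)+
  qed
  then have "card Lost \<le> 1"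
    by (simp add: card_le_Suc0_iff_eq Lost_def component_mins_def)
  moreover have "component_mins n F \<subseteq> component_mins n (insert {a, b} F) \<union> Lost"
    by (auto simp: Lost_def)
  then have "card (component_mins n F) \<le> card (component_mins n (insert {a, b} F) \<union> Lost)"
    by (intro card_mono) (auto simp: Lost_def component_mins_def)
  ultimately show ?thesis
    using card_Un_le[of "component_mins n (insert {a, b} F)" Lost] by linarith
qed

lemma card_le_card_edges_plus_components:
  assumes "finite F" "\<forall>e\<in>F. \<exists>a b. e = {a, b}"
  shows "n \<le> card F + card (component_mins n F)"
  using assms
proof (induction F rule: finite_induct)
  case empty
  have "component_mins n {} = {..<n}"
    by (auto simp: component_mins_def adj_def)
  then show ?case by simp
next
  case (insert e F)
  then obtain a b where "e = {a, b}" by auto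
  with insert card_component_mins_insert_edge[of n F a b] show ?case by simp
qed

lemma graph_finite: "is_graph n E \<Longrightarrow> finite E"
  unfolding is_graph_def
  by (rule finite_subset[of _ "Pow {..<n}"]) auto

lemma graph_edge:
  assumes "is_graph n E" "{a, b} \<in> E"
  shows "a \<noteq> b" "a < n" "b < n"
  using assms unfolding is_graph_def by (metis doubleton_eq_iff)+

lemma connected_graph_card_edges:
  assumes "is_graph n F" "connected_graph n F" "n \<ge> 1"
  shows "n \<le> card F + 1"
proof -
  have "component_mins n F \<subseteq> {0}"
  proof
    fix u
    assume u: "u \<in> component_mins n F"
    then have "(0, u) \<in> reach F"
      using assms(2,3) by (simp add: component_mins_def connected_graph_def)
    with u show "u \<in> {0}"
      by (auto simp: component_mins_def)
  qed
  then have "card (component_mins n F) \<le> 1"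
    using card_mono[of "{0}" "component_mins n F"] by simp
  moreover have "\<forall>e\<in>F. \<exists>a b. e = {a, b}"
    using assms(1) unfolding is_graph_def by blast
  then have "n \<le> card F + card (component_mins n F)"
    by (rule card_le_card_edges_plus_components[OF graph_finite[OF assms(1)]])
  ultimately show ?thesis
    by linarith
qed

lemma graph_edge_at:
  assumes "is_graph n E" "e \<in> E" "w \<in> e"
  obtains p where "e = {w, p}" "p \<noteq> w"
proof -
  obtain u v where "e = {u, v}" "u \<noteq> v"
    using assms(1,2) unfolding is_graph_def by blast
  with assms(3) that show thesis
    by (auto simp: insert_commute)
qed

lemma graph_deg2_edges:
  assumes "is_graph n E" "deg E w = 2"
  obtains x y where "x \<noteq> y" "x \<noteq> w" "y \<noteq> w" "{e\<in>E. w \<in> e} = {{w, x}, {w, y}}"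
proof -
  obtain e1 e2 where e: "{e\<in>E. w \<in> e} = {e1, e2}" "e1 \<noteq> e2"
    using assms(2) unfolding deg_def card_2_iff by blast
  then have "e1 \<in> E" "w \<in> e1" "e2 \<in> E" "w \<in> e2"
    by blast+
  obtain x where "e1 = {w, x}" "x \<noteq> w"
    by (rule graph_edge_at[OF assms(1) \<open>e1 \<in> E\<close> \<open>w \<in> e1\<close>])
  moreover obtain y where "e2 = {w, y}" "y \<noteq> w"
    by (rule graph_edge_at[OF assms(1) \<open>e2 \<in> E\<close> \<open>w \<in> e2\<close>])
  ultimately show thesis
    using e that by auto
qed

lemma graph_deg2_other_edge:
  assumes "is_graph n E" "deg E w = 2" "{w, y} \<in> E"
  obtains x where "x \<noteq> y" "x \<noteq> w" "{e\<in>E. w \<in> e} = {{w, x}, {w, y}}"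
proof -
  obtain a b where ab: "a \<noteq> b" "a \<noteq> w" "b \<noteq> w" "{e\<in>E. w \<in> e} = {{w, a}, {w, b}}"
    using graph_deg2_edges[OF assms(1,2)] .
  moreover have "{w, y} \<in> {e\<in>E. w \<in> e}"
    using assms(3) by simp
  ultimately have "{w, y} = {w, a} \<or> {w, y} = {w, b}"
    by simp
  then have "y = a \<or> y = b"
    using ab(2,3) by (auto simp: doubleton_eq_iff)
  then show thesis
  proof
    assume "y = a"
    moreover have "{{w, a}, {w, b}} = {{w, b}, {w, a}}"
      by (rule insert_commute)
    ultimately show thesis
      using ab by (intro that[of b]) simp_all
  next
    assume "y = b"
    then show thesis
      using ab by (intro that[of a]) simp_all
  qed
qed

lemma deg_pos_if_edge:
  assumes "finite E" "e \<in> E" "u \<in> e"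
  shows "deg E u \<ge> 1"
  using assms by (auto simp: deg_def Suc_le_eq card_gt_0_iff)

lemma handshake:
  assumes "is_graph n E"
  shows "(\<Sum>v<n. deg E v) = 2 * card E"
proof -
  have "(\<Sum>v<n. deg E v) = (\<Sum>v<n. \<Sum>e\<in>E. if v \<in> e then 1 else 0)"
    unfolding deg_def using graph_finite[OF assms] by (simp add: sum.If_cases Int_def conj_commute)
  also have "\<dots> = (\<Sum>e\<in>E. \<Sum>v<n. if v \<in> e then 1 else 0)"
    by (rule sum.swap)
  also have "\<dots> = (\<Sum>e\<in>E. 2)"
  proof (rule sum.cong[OF refl])
    fix e
    assume "e \<in> E"
    then obtain a b where ab: "e = {a, b}" "a \<noteq> b" "a < n" "b < n"
      using assms unfolding is_graph_def by blast
    then have "{..<n} \<inter> {v. v \<in> e} = {a, b}"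
      by auto
    then show "(\<Sum>v<n. if v \<in> e then 1 else 0) = (2::nat)"
      using ab(2) by (simp add: sum.If_cases)
  qed
  finally show ?thesis by simp
qed

lemma tree_edge_is_bridge:
  assumes "is_tree n E" "{a, b} \<in> E"
  shows "(a, b) \<notin> reach (E - {{a, b}})"
proof
  let ?F = "E - {{a, b}}"
  assume ab: "(a, b) \<in> reach ?F"
  have graph: "is_graph n E" and conn: "connected_graph n E" and card: "card E = n - 1"
    and "n \<ge> 1"
    using assms(1) by (auto simp: is_tree_def)
  have "is_graph n ?F"
    using graph unfolding is_graph_def by blast
  moreover have "connected_graph n ?F"
    unfolding connected_graph_def
  proof (intro allI impI)
    fix u v
    assume "u < n" "v < n"
    moreover have "insert {a, b} ?F = E"
      using assms(2) by blast
    ultimately have "(u, v) \<in> reach (insert {a, b} ?F)"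
      using conn by (simp add: connected_graph_def)
    then show "(u, v) \<in> reach ?F"
      by (rule reach_insert_redundant_edge[OF ab])
  qed
  ultimately have "n \<le> card ?F + 1"
    using \<open>n \<ge> 1\<close> by (rule connected_graph_card_edges)
  moreover have "card ?F = n - 2"
    using card assms(2) graph_finite[OF graph] by simp
  moreover have "card E \<ge> 1"
    using assms(2) graph_finite[OF graph] by (auto simp: Suc_le_eq card_gt_0_iff)
  ultimately show False
    using card by linarith
qed

lemma tree_deg_pos:
  assumes "is_tree n E" "n \<ge> 2" "v < n"
  shows "deg E v \<ge> 1"
proof -
  obtain u where u: "u < n" "u \<noteq> v"
    using assms(2,3) that[of "if v = 0 then 1 else 0"] by (auto split: if_splits)
  then have "(v, u) \<in> reach E"
    using assms(1,3) by (simp add: is_tree_def connected_graph_def)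
  then obtain m where "(v, m) \<in> adj E"
    using u(2) by (auto elim: converse_rtranclE)
  then have "{v, m} \<in> E"
    by simp
  moreover have "finite E"
    using assms(1) graph_finite by (auto simp: is_tree_def)
  ultimately show ?thesis
    using deg_pos_if_edge[of E "{v, m}" v] by simp
qed

lemma sum_deg_by_num_deg:
  assumes "finite D" "deg E ` {..<n} \<subseteq> D"
  shows "(\<Sum>v<n. f (deg E v)) = (\<Sum>i\<in>D. f i * num_deg n E i)"
proof -
  have "(\<Sum>v<n. f (deg E v)) = (\<Sum>i\<in>D. \<Sum>v\<in>{v\<in>{..<n}. deg E v = i}. f (deg E v))"
    by (rule sum.group[OF finite_lessThan assms(1,2), symmetric])
  also have "\<dots> = (\<Sum>i\<in>D. f i * num_deg n E i)"
    by (rule sum.cong) (auto simp: num_deg_def)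
  finally show ?thesis .
qed

lemma chemical_tree_degree_counts:
  assumes "is_tree n E" "chemical n E" "n \<ge> 2"
  shows "n = num_deg n E 1 + num_deg n E 2 + num_deg n E 3 + num_deg n E 4"
    and "num_deg n E 1 + 2 * num_deg n E 2 + 3 * num_deg n E 3 + 4 * num_deg n E 4 = 2 * (n - 1)"
    and "num_branching n E = num_deg n E 3 + num_deg n E 4"
proof -
  have degs: "deg E v \<in> {1, 2, 3, 4}" if "v < n" for v
    using tree_deg_pos[OF assms(1,3) that] assms(2) that by (auto simp: chemical_def)
  then have range: "deg E ` {..<n} \<subseteq> {1, 2, 3, 4}"
    by blast
  show "n = num_deg n E 1 + num_deg n E 2 + num_deg n E 3 + num_deg n E 4"
    using sum_deg_by_num_deg[OF _ range, of "\<lambda>_. 1"] by simp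
  have "(\<Sum>v<n. deg E v) = 2 * (n - 1)"
    using handshake assms(1) by (simp add: is_tree_def)
  then show "num_deg n E 1 + 2 * num_deg n E 2 + 3 * num_deg n E 3 + 4 * num_deg n E 4 = 2 * (n - 1)"
    using sum_deg_by_num_deg[OF _ range, of id] by simp
  have "{v. v < n \<and> deg E v > 2} = {v. v < n \<and> deg E v = 3} \<union> {v. v < n \<and> deg E v = 4}"
    using degs by fastforce
  then show "num_branching n E = num_deg n E 3 + num_deg n E 4"
    unfolding num_branching_def num_deg_def by (simp add: card_Un_disjoint disjoint_iff)
qed

lemma reach_avoiding_one_of_two_edges:
  assumes edges: "{e\<in>E. w \<in> e} = {{w, x}, {w, y}}" and "x \<noteq> y" "y \<noteq> w"
    and "(w, u) \<in> reach E"
  shows "(w, u) \<in> reach (E - {{w, y}}) \<or> (w, u) \<in> reach (E - {{w, x}})"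
proof -
  let ?F = "E - {{w, y}}" and ?G = "E - {{w, x}, {w, y}}"
  have "{w, x} \<in> E" "{w, y} \<in> E" "{w, x} \<noteq> {w, y}"
    using edges \<open>x \<noteq> y\<close> \<open>y \<noteq> w\<close> by (auto simp: doubleton_eq_iff)
  then have F: "E = insert {w, y} ?F" and G: "?F = insert {w, x} ?G"
    by blast+
  have isolated: "\<forall>e\<in>?G. w \<notin> e"
    using edges by blast
  have "(w, u) \<in> reach (insert {w, y} ?F)"
    using assms(4) F by simp
  then consider "(w, u) \<in> reach ?F" | "(y, u) \<in> reach ?F"
    using reach_insert_edge by blast
  then show ?thesis
  proof cases
    case 2
    then have "(y, u) \<in> reach (insert {w, x} ?G)"
      using G by simp
    then consider "(y, u) \<in> reach ?G" | "(y, w) \<in> reach ?G" | "(w, u) \<in> reach ?G"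
      using reach_insert_edge by blast
    then have "(w, u) \<in> reach (E - {{w, x}})"
    proof cases
      case 1
      then have "(y, u) \<in> reach (E - {{w, x}})"
        by (rule reach_mono[rotated]) blast
      moreover have "(w, y) \<in> adj (E - {{w, x}})"
        using edges \<open>x \<noteq> y\<close> by (auto simp: doubleton_eq_iff)
      ultimately show ?thesis
        by (simp add: converse_rtrancl_into_rtrancl)
    next
      case 2
      then have "y = w"
        using reach_from_isolated[OF isolated] reach_sym by blast
      with \<open>y \<noteq> w\<close> show ?thesis ..
    next
      case 3
      then have "u = w"
        by (rule reach_from_isolated[OF isolated])
      then show ?thesis by simp
    qed
    then show ?thesis ..
  qed simp
qed

definition rotate_edge :: "nat set set \<Rightarrow> nat \<Rightarrow> nat \<Rightarrow> nat \<Rightarrow> nat set set" where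
  "rotate_edge E w y v = insert {v, y} (E - {{w, y}})"

text \<open>Since v lies on w's side of the bridge wy, moving wy to vy yields again a tree.\<close>

locale tree_edge_rotation =
  fixes n :: nat and E :: "nat set set" and w y v :: nat
  assumes tree: "is_tree n E"
    and edge: "{w, y} \<in> E"
    and v_less: "v < n"
    and v_ne_w: "v \<noteq> w"
    and reach_w_v: "(w, v) \<in> reach (E - {{w, y}})"
begin

abbreviation rotated :: "nat set set" where
  "rotated \<equiv> rotate_edge E w y v"

lemma graph: "is_graph n E"
  using tree by (simp add: is_tree_def)

lemma finite_E: "finite E"
  by (rule graph_finite[OF graph])

lemma w_ne_y: "w \<noteq> y" and w_less: "w < n" and y_less: "y < n"
  using graph_edge[OF graph edge] by auto

lemma edge_is_bridge: "(w, y) \<notin> reach (E - {{w, y}})"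
  by (rule tree_edge_is_bridge[OF tree edge])

lemma v_ne_y: "v \<noteq> y"
  using reach_w_v edge_is_bridge by blast

lemma new_edge_notin: "{v, y} \<notin> E"
proof
  assume "{v, y} \<in> E"
  then have "(v, y) \<in> adj (E - {{w, y}})"
    using v_ne_w v_ne_y by (auto simp: doubleton_eq_iff)
  with reach_w_v edge_is_bridge show False
    by (meson rtrancl_into_rtrancl)
qed

lemma edges_at_rotated:
  "{e\<in>rotated. u \<in> e} =
     (if u \<in> {v, y} then insert {v, y} ({e\<in>E. u \<in> e} - {{w, y}}) else {e\<in>E. u \<in> e} - {{w, y}})"
  by (auto simp: rotate_edge_def)

lemma deg_rotated_w: "deg rotated w = deg E w - 1"
  using edges_at_rotated[of w] v_ne_w w_ne_y edge finite_E by (simp add: deg_def card_Diff_singleton_if)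

lemma deg_rotated_v: "deg rotated v = deg E v + 1"
proof -
  have "{e\<in>rotated. v \<in> e} = insert {v, y} {e\<in>E. v \<in> e}"
    using edges_at_rotated[of v] v_ne_w v_ne_y by (auto simp: doubleton_eq_iff)
  then show ?thesis
    using new_edge_notin finite_E by (simp add: deg_def)
qed

lemma deg_rotated_other: "u \<noteq> v \<Longrightarrow> u \<noteq> w \<Longrightarrow> deg rotated u = deg E u"
proof (cases "u = y")
  case True
  let ?S = "{e\<in>E. y \<in> e}"
  have "{e\<in>rotated. y \<in> e} = insert {v, y} (?S - {{w, y}})"
    using edges_at_rotated[of y] by simp
  moreover have "finite ?S" "{w, y} \<in> ?S" "{v, y} \<notin> ?S"
    using finite_E edge new_edge_notin by auto
  ultimately show ?thesis
    using True card_Suc_Diff1[of ?S "{w, y}"] by (simp add: deg_def)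
next
  case False
  moreover assume "u \<noteq> v" "u \<noteq> w"
  ultimately show ?thesis
    using edges_at_rotated[of u] by (simp add: deg_def)
qed

lemma rotated_tree: "is_tree n rotated"
proof -
  have "is_graph n rotated"
    using graph v_ne_y v_less y_less unfolding rotate_edge_def is_graph_def by blast
  moreover have "(w, y) \<in> reach rotated"
  proof -
    have "(w, v) \<in> reach rotated"
      using reach_w_v by (rule reach_mono[rotated]) (auto simp: rotate_edge_def)
    moreover have "(v, y) \<in> adj rotated"
      by (simp add: rotate_edge_def)
    ultimately show ?thesis
      by (rule rtrancl_into_rtrancl)
  qed
  then have "connected_graph n rotated"
    unfolding connected_graph_def
  proof (intro allI impI)
    fix a b
    assume "a < n" "b < n"
    then have "(a, b) \<in> reach E"
      using tree by (simp add: is_tree_def connected_graph_def)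
    then have "(a, b) \<in> reach (insert {w, y} rotated)"
      by (rule reach_mono[rotated]) (auto simp: rotate_edge_def)
    then show "(a, b) \<in> reach rotated"
      by (rule reach_insert_redundant_edge[OF \<open>(w, y) \<in> reach rotated\<close>])
  qed
  moreover have "card rotated = card E"
    using finite_E edge new_edge_notin card_Suc_Diff1[of E "{w, y}"] by (simp add: rotate_edge_def)
  ultimately show ?thesis
    using tree by (simp add: is_tree_def)
qed

lemma deg_w_pos: "deg E w \<ge> 1"
  using deg_pos_if_edge[OF finite_E edge] by simp

lemma num_branching_rotated:
  assumes "deg E w \<noteq> 3" "deg E v \<noteq> 2"
  shows "num_branching n rotated = num_branching n E"
proof -
  have "deg rotated u > 2 \<longleftrightarrow> deg E u > 2" for u
    using assms deg_rotated_v deg_rotated_w deg_rotated_other[of u] by (cases "u = v \<or> u = w") auto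
  then show ?thesis
    by (simp add: num_branching_def)
qed

lemma chemical_rotated:
  assumes "chemical n E" "deg E v < 4"
  shows "chemical n rotated"
  using assms deg_rotated_v deg_rotated_w deg_rotated_other
  unfolding chemical_def by (metis Suc_eq_plus1 Suc_leI diff_le_self le_trans)

lemma M1_rotated_gt:
  assumes "deg E w \<le> deg E v"
  shows "M1 n E < M1 n rotated"
proof -
  have split: "(\<Sum>u<n. f u) = f v + f w + (\<Sum>u\<in>{..<n} - {v} - {w}. f u)" for f :: "nat \<Rightarrow> nat"
    using v_less w_less v_ne_w by (simp add: sum.remove[of "{..<n}" v] sum.remove[of "{..<n} - {v}" w])
  have rest: "(\<Sum>u\<in>{..<n} - {v} - {w}. (deg rotated u)\<^sup>2) = (\<Sum>u\<in>{..<n} - {v} - {w}. (deg E u)\<^sup>2)"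
    by (rule sum.cong) (auto simp: deg_rotated_other)
  have "(deg E v)\<^sup>2 + (deg E w)\<^sup>2 < (deg E v + 1)\<^sup>2 + (deg E w - 1)\<^sup>2"
    using assms deg_w_pos by (cases "deg E w") (auto simp: power2_eq_square)
  then show ?thesis
    unfolding M1_def split[of "\<lambda>u. (deg E u)\<^sup>2"] split[of "\<lambda>u. (deg rotated u)\<^sup>2"] rest
    by (simp add: deg_rotated_v deg_rotated_w)
qed

lemma prod_deg_rotated_eq:
  assumes "v \<notin> e" "w \<notin> e"
  shows "(\<Prod>u\<in>e. deg rotated u) = (\<Prod>u\<in>e. deg E u)"
  using assms by (intro prod.cong refl deg_rotated_other) auto

lemma prod_deg_rotated_gt:
  assumes "e \<in> E" "v \<in> e" "w \<notin> e"
  shows "(\<Prod>u\<in>e. deg E u) < (\<Prod>u\<in>e. deg rotated u)"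
proof -
  obtain p where e: "e = {v, p}" "p \<noteq> v"
    using graph_edge_at[OF graph assms(1,2)] .
  have "deg rotated p = deg E p"
    using e assms(3) by (intro deg_rotated_other) auto
  moreover have "deg E p \<ge> 1"
    using deg_pos_if_edge[OF finite_E assms(1)] e by simp
  ultimately show ?thesis
    using e by (simp add: deg_rotated_v)
qed

lemma sum_prod_deg_rotated_ge:
  assumes "F \<subseteq> E" "\<forall>e\<in>F. w \<notin> e"
  shows "(\<Sum>e\<in>F. \<Prod>u\<in>e. deg E u) + card {e\<in>F. v \<in> e} \<le> (\<Sum>e\<in>F. \<Prod>u\<in>e. deg rotated u)"
proof -
  let ?Fv = "{e\<in>F. v \<in> e}"
  have fin: "finite F"
    using assms(1) finite_E by (rule finite_subset)
  have "(\<Sum>e\<in>?Fv. \<Prod>u\<in>e. deg E u) + card ?Fv = (\<Sum>e\<in>?Fv. (\<Prod>u\<in>e. deg E u) + 1)"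
    unfolding sum.distrib by simp
  also have "\<dots> \<le> (\<Sum>e\<in>?Fv. \<Prod>u\<in>e. deg rotated u)"
    using assms prod_deg_rotated_gt by (intro sum_mono) (auto simp: Suc_le_eq)
  finally have "(\<Sum>e\<in>?Fv. \<Prod>u\<in>e. deg E u) + card ?Fv \<le> (\<Sum>e\<in>?Fv. \<Prod>u\<in>e. deg rotated u)" .
  moreover have "(\<Sum>e\<in>F - ?Fv. \<Prod>u\<in>e. deg E u) = (\<Sum>e\<in>F - ?Fv. \<Prod>u\<in>e. deg rotated u)"
    using assms(2) prod_deg_rotated_eq by (intro sum.cong) auto
  ultimately show ?thesis
    using sum.subset_diff[of ?Fv F "\<lambda>e. \<Prod>u\<in>e. deg E u"]
      sum.subset_diff[of ?Fv F "\<lambda>e. \<Prod>u\<in>e. deg rotated u"] fin by simp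
qed

lemma M2_rotated_gt:
  assumes "chemical n E" "deg E w = 2" "deg E v = 3"
  shows "M2 E < M2 rotated"
proof -
  define P where "P F e = (\<Prod>u\<in>e. deg F u)" for F e
  obtain x where "x \<noteq> y" "x \<noteq> w" and edges_w: "{e\<in>E. w \<in> e} = {{w, x}, {w, y}}"
    using graph_deg2_other_edge[OF graph assms(2) edge] .
  let ?A = "E - {{w, y}}"
  let ?B = "?A - {{w, x}}"
  let ?Bv = "{e\<in>?B. v \<in> e}"
  have wx: "{w, x} \<in> E" "{w, x} \<in> ?A"
    using edges_w \<open>x \<noteq> y\<close> by (auto simp: doubleton_eq_iff)
  have fin: "finite ?A"
    using finite_E by simp
  have M2_E: "M2 E = P E {w, y} + P E {w, x} + sum (P E) ?B"
    unfolding M2_def P_def using finite_E fin edge wx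
    by (simp add: sum.remove[of E "{w, y}"] sum.remove[of ?A "{w, x}"])
  have M2_rotated: "M2 rotated = P rotated {v, y} + P rotated {w, x} + sum (P rotated) ?B"
    unfolding M2_def P_def rotate_edge_def using fin new_edge_notin wx
    by (simp add: sum.remove[of ?A "{w, x}"])
  have "?B \<subseteq> E" "\<forall>e\<in>?B. w \<notin> e"
    using edges_w by blast+
  then have B: "sum (P E) ?B + card ?Bv \<le> sum (P rotated) ?B"
    unfolding P_def by (rule sum_prod_deg_rotated_ge)
  txt \<open>The edge wx loses 2 (if x = v) or deg x \<le> 4 (otherwise), each other edge at v
    gains at least 1, and wy turning into vy gains 2 deg y.\<close>
  have "P E {w, x} \<le> P rotated {w, x} + card ?Bv + 1"
  proof (cases "x = v")
    case True
    then have "?Bv = {e\<in>E. v \<in> e} - {{w, v}}"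
      using v_ne_w v_ne_y by (auto simp: doubleton_eq_iff)
    then have "card ?Bv = 2"
      using assms(3) finite_E wx(1) True by (simp add: deg_def card_Diff_singleton_if)
    then show ?thesis
      using True assms(2,3) v_ne_w by (simp add: P_def deg_rotated_v deg_rotated_w)
  next
    case False
    then have "?Bv = {e\<in>E. v \<in> e}"
      using v_ne_w v_ne_y by (auto simp: doubleton_eq_iff)
    then have "card ?Bv = 3"
      using assms(3) by (simp add: deg_def)
    moreover have "deg E x \<le> 4"
      using assms(1) graph_edge[OF graph wx(1)] by (simp add: chemical_def)
    ultimately show ?thesis
      using False \<open>x \<noteq> w\<close> assms(2) by (simp add: P_def deg_rotated_w deg_rotated_other)
  qed
  moreover have "P E {w, y} + 1 < P rotated {v, y}"
    using assms(2,3) v_ne_y w_ne_y deg_pos_if_edge[OF finite_E edge, of y]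
    by (simp add: P_def deg_rotated_v deg_rotated_other)
  ultimately show ?thesis
    using M2_E M2_rotated B by linarith
qed

end

lemma maximal_chemical_tree_num_deg3_eq_0:
  assumes "E \<in> CT n b"
    and "(\<forall>E'\<in>CT n b. M1 n E' \<le> M1 n E) \<or> (\<forall>E'\<in>CT n b. M2 E' \<le> M2 E)"
    and "num_deg n E 2 > 0"
  shows "num_deg n E 3 = 0"
proof (rule ccontr)
  assume "num_deg n E 3 \<noteq> 0"
  with assms(3) obtain w v where w: "w < n" "deg E w = 2" and v: "v < n" "deg E v = 3"
    by (auto simp: num_deg_def card_gt_0_iff)
  have tree: "is_tree n E" and chem: "chemical n E" and branching: "num_branching n E = b"
    using assms(1) by (auto simp: CT_def)
  then have graph: "is_graph n E"
    by (simp add: is_tree_def)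
  obtain x y where "x \<noteq> y" "y \<noteq> w" and edges_w: "{e\<in>E. w \<in> e} = {{w, x}, {w, y}}"
    using graph_deg2_edges[OF graph w(2)] by metis
  have "(w, v) \<in> reach E"
    using tree w v by (simp add: is_tree_def connected_graph_def)
  then have "(w, v) \<in> reach (E - {{w, y}}) \<or> (w, v) \<in> reach (E - {{w, x}})"
    by (rule reach_avoiding_one_of_two_edges[OF edges_w \<open>x \<noteq> y\<close> \<open>y \<noteq> w\<close>])
  moreover have "{w, y} \<in> E" "{w, x} \<in> E"
    using edges_w by blast+
  ultimately obtain z where "{w, z} \<in> E" "(w, v) \<in> reach (E - {{w, z}})"
    by blast
  then interpret tree_edge_rotation n E w z v
    using tree w v by unfold_locales auto
  have "rotated \<in> CT n b"
    using rotated_tree chemical_rotated[OF chem] num_branching_rotated branching w v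
    by (simp add: CT_def)
  moreover have "M1 n E < M1 n rotated" "M2 E < M2 rotated"
    using M1_rotated_gt M2_rotated_gt[OF chem] w v by simp_all
  ultimately show False
    using assms(2) leD by blast
qed

theorem lemma8:
  fixes n b :: nat and E :: "nat set set"
  assumes "1 \<le> b" and "real b < real n / 2 - 1"
    and "(E \<in> CT n b \<and> (\<forall>E'\<in>CT n b. M1 n E' \<le> M1 n E))
       \<or> (E \<in> CT n b \<and> (\<forall>E'\<in>CT n b. M2 E' \<le> M2 E))"
  shows "(num_deg n E 2 > 0 \<longrightarrow>
            int (num_deg n E 1) = 2 * int b + 2 \<and> int (num_deg n E 2) = int n - 3 * int b - 2
            \<and> num_deg n E 3 = 0 \<and> num_deg n E 4 = b)
       \<and> (num_deg n E 2 = 0 \<longleftrightarrow>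
            int (num_deg n E 1) = int n - int b \<and> int (num_deg n E 3) = 3 * int b - int n + 2
            \<and> int (num_deg n E 4) = int n - 2 * int b - 2)"
proof -
  have E: "E \<in> CT n b"
    and maximal: "(\<forall>E'\<in>CT n b. M1 n E' \<le> M1 n E) \<or> (\<forall>E'\<in>CT n b. M2 E' \<le> M2 E)"
    using assms(3) by blast+
  then have tree: "is_tree n E" and chem: "chemical n E" and branching: "num_branching n E = b"
    by (auto simp: CT_def)
  have "n \<ge> 2"
    using assms(2) by linarith
  note counts = chemical_tree_degree_counts[OF tree chem this, unfolded branching]
  have "int n = int (num_deg n E 1) + int (num_deg n E 2) + int (num_deg n E 3) + int (num_deg n E 4)"
    "int (num_deg n E 1) + 2 * int (num_deg n E 2) + 3 * int (num_deg n E 3) + 4 * int (num_deg n E 4)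
       = 2 * int n - 2"
    "int b = int (num_deg n E 3) + int (num_deg n E 4)"
    using counts \<open>n \<ge> 2\<close> by linarith+
  moreover have "num_deg n E 2 > 0 \<Longrightarrow> num_deg n E 3 = 0"
    by (rule maximal_chemical_tree_num_deg3_eq_0[OF E maximal])
  ultimately show ?thesis
    by auto
qed

end
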